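(* Assume the hypotheses of Theorem 3 (see context), and assume moreover that for every $k\in\mathbb{N}$ there exists $j_k\ge k$ with $(\hat y,u_{j_k})\neq0$. Let $k_n$ be the stopping index of the modified discrepancy principle. Then for every $k\in\mathbb{N}$, $\lim_{n\to\infty}\mathbb{P}(k_n\ge k)=1$; equivalently, there is a deterministic sequence $q_n\to\infty$ with $\mathbb{P}(k_n\ge q_n)\to1$.
   Context: Setting: $K:\mathcal{X}\to\mathcal{Y}$ compact linear between infinite-dimensional real separable Hilbert spaces, dense range, singular value decomposition $(\sigma_j,u_j,v_j)$ with $\sigma_j>0$ nonincreasing to $0$, $Kv_j=\sigma_ju_j$. Hypotheses of Theorem 3: $\hat y=K\hat x$, $Y_1,Y_2,\dots$ i.i.d. $\mathcal{Y}$-valued with $\mathbb{E}Y_1=\hat y$; $q>p-1>0$, $\sigma_j^2\asymp j^{-q}$, $0<v_j:=\mathbb{E}(Y_1-\hat y,u_j)^2\le C_pj^{-p}$, $\mathbb{E}(Y_1-\hat y,u_j)^4\le Cv_j^2$; $0<\varepsilon_1<1$, $0<\varepsilon_2<\min(1,p-1)$; $\hat x\in\{\sum_j\sigma_j^\nu(\xi,v_j)v_j:\|\xi\|\le\rho\}$ with $\nu,\rho>0$. Modified discrepancy principle: $\bar Y_n:=\frac1n\sum_{i\le n}Y_i$, $m_n:=\lfloor n^{1-\varepsilon_1}\rfloor$, $s_{j,n}^2:=\frac1{n-1}\sum_{i=1}^n(Y_i-\bar Y_n,u_j)^2$, $S_n:=\sum_{j'=1}^{m_n}s_{j',n}^2$,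 $d_{1,n}:=\sqrt{\min(S_n/s_{1,n}^2,1/\sigma_1^2)}$, $d_{j,n}:=\sqrt{\min(j^{-(1+\varepsilon_2)}S_n/s_{j,n}^2,\ \sigma_{j-1}^2d_{j-1,n}^2/\sigma_j^2)}$ for $2\le j\le m_n$, $\delta_n':=\sqrt{\frac1n\sum_{j=1}^{m_n}d_{j,n}^2s_{j,n}^2}$, and $k_n:=\min\{k\in\{0,\dots,m_n\}:\sqrt{\sum_{j=k+1}^{m_n}d_{j,n}^2(\bar Y_n,u_j)^2}\le\delta_n'\}$. *)

theory Defs
  imports "HOL-Probability.Probability"
begin

text \<open>The samples Y_1, Y_2, ... of the paper are
  Y 0, Y 1, ... here (Y i \<omega> is the (i+1)-st sample). Singular vectors and values
  are indexed from 1 (u 1, u 2, ...), as in the paper.\<close>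

definition Ybar :: "(nat \<Rightarrow> 'm \<Rightarrow> 'y::real_inner) \<Rightarrow> nat \<Rightarrow> 'm \<Rightarrow> 'y" where
  "Ybar Y n \<omega> = (1 / real n) *\<^sub>R (\<Sum>i<n. Y i \<omega>)"

definition mdp_m :: "real \<Rightarrow> nat \<Rightarrow> nat" where
  "mdp_m eps1 n = nat \<lfloor>real n powr (1 - eps1)\<rfloor>"

definition s2 :: "(nat \<Rightarrow> 'm \<Rightarrow> 'y::real_inner) \<Rightarrow> (nat \<Rightarrow> 'y) \<Rightarrow> nat \<Rightarrow> nat \<Rightarrow> 'm \<Rightarrow> real" where
  "s2 Y u j n \<omega> = (1 / (real n - 1)) * (\<Sum>i<n. (inner (Y i \<omega> - Ybar Y n \<omega>) (u j))\<^sup>2)"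

definition S_tot :: "real \<Rightarrow> (nat \<Rightarrow> 'm \<Rightarrow> 'y::real_inner) \<Rightarrow> (nat \<Rightarrow> 'y) \<Rightarrow> nat \<Rightarrow> 'm \<Rightarrow> real" where
  "S_tot eps1 Y u n \<omega> = (\<Sum>j'=1..mdp_m eps1 n. s2 Y u j' n \<omega>)"

text \<open>Convention: a quotient with vanishing denominator s_{j,n}^2 = 0 is read as
  +infinity, so the minimum is then the other argument.\<close>
fun d2 :: "real \<Rightarrow> real \<Rightarrow> (nat \<Rightarrow> real) \<Rightarrow> (nat \<Rightarrow> 'm \<Rightarrow> 'y::real_inner) \<Rightarrow> (nat \<Rightarrow> 'y)
           \<Rightarrow> nat \<Rightarrow> nat \<Rightarrow> 'm \<Rightarrow> real" where
  "d2 eps1 eps2 \<sigma> Y u 0 n \<omega> = 0"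
| "d2 eps1 eps2 \<sigma> Y u (Suc 0) n \<omega> =
     (if s2 Y u 1 n \<omega> = 0 then 1 / (\<sigma> 1)\<^sup>2
      else min (S_tot eps1 Y u n \<omega> / s2 Y u 1 n \<omega>) (1 / (\<sigma> 1)\<^sup>2))"
| "d2 eps1 eps2 \<sigma> Y u (Suc (Suc k)) n \<omega> =
     (let j = Suc (Suc k);
          prev = (\<sigma> (Suc k))\<^sup>2 * d2 eps1 eps2 \<sigma> Y u (Suc k) n \<omega> / (\<sigma> j)\<^sup>2
      in if s2 Y u j n \<omega> = 0 then prev
         else min (real j powr (-(1 + eps2)) * S_tot eps1 Y u n \<omega> / s2 Y u j n \<omega>) prev)"

definition dd :: "real \<Rightarrow> real \<Rightarrow> (nat \<Rightarrow> real) \<Rightarrow> (nat \<Rightarrow> 'm \<Rightarrow> 'y::real_inner) \<Rightarrow> (nat \<Rightarrow> 'y)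
           \<Rightarrow> nat \<Rightarrow> nat \<Rightarrow> 'm \<Rightarrow> real" where
  "dd eps1 eps2 \<sigma> Y u j n \<omega> = sqrt (d2 eps1 eps2 \<sigma> Y u j n \<omega>)"

definition delta' :: "real \<Rightarrow> real \<Rightarrow> (nat \<Rightarrow> real) \<Rightarrow> (nat \<Rightarrow> 'm \<Rightarrow> 'y::real_inner) \<Rightarrow> (nat \<Rightarrow> 'y)
           \<Rightarrow> nat \<Rightarrow> 'm \<Rightarrow> real" where
  "delta' eps1 eps2 \<sigma> Y u n \<omega> =
     sqrt ((1 / real n) * (\<Sum>j=1..mdp_m eps1 n. (dd eps1 eps2 \<sigma> Y u j n \<omega>)\<^sup>2 * s2 Y u j n \<omega>))"

definition k_stop :: "real \<Rightarrow> real \<Rightarrow> (nat \<Rightarrow> real) \<Rightarrow> (nat \<Rightarrow> 'm \<Rightarrow> 'y::real_inner) \<Rightarrow> (nat \<Rightarrow> 'y)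
           \<Rightarrow> nat \<Rightarrow> 'm \<Rightarrow> nat" where
  "k_stop eps1 eps2 \<sigma> Y u n \<omega> =
     (LEAST k. k \<le> mdp_m eps1 n \<and>
        sqrt (\<Sum>j=k+1..mdp_m eps1 n. (dd eps1 eps2 \<sigma> Y u j n \<omega>)\<^sup>2 * (inner (Ybar Y n \<omega>) (u j))\<^sup>2)
          \<le> delta' eps1 eps2 \<sigma> Y u n \<omega>)"

end

theory Submission
  imports Defs
begin

text \<open>Fix k and pick j0 \<ge> k with (yhat, u j0) \<noteq> 0. Unwinding the recursion for d_{j,n}
  with S_n / s_{j,n}^2 \<ge> 1 gives a deterministic positive lower bound for d_{j0,n}^2, and by
  Chebyshev the coefficient (Ybar_n, u j0) stays close to (yhat, u j0); so with probability
  tending to one the residual at every k' < k is bounded below by a positive constant. On the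
  other hand delta_n'^2 \<le> m_n S_n / n, and E S_n is bounded because the variances v_j are
  summable; since m_n / n \<rightarrow> 0, Markov's inequality makes delta_n'^2 small with probability
  tending to one. Hence the principle does not stop before k. A diagonal argument turns the
  convergence for each fixed k into one along some q_n \<rightarrow> \<infinity>.\<close>

lemma s2_nonneg: "0 \<le> s2 Y u j n \<omega>"
proof (cases "n \<le> 1")
  case True
  then have "n = 0 \<or> n = 1" by auto
  then show ?thesis unfolding s2_def by auto
next
  case False
  then show ?thesis unfolding s2_def by (intro mult_nonneg_nonneg sum_nonneg) auto
qed

lemma S_tot_nonneg: "0 \<le> S_tot eps1 Y u n \<omega>"
  unfolding S_tot_def by (intro sum_nonneg s2_nonneg)

lemma s2_le_S_tot: "1 \<le> j \<Longrightarrow> j \<le> mdp_m eps1 n \<Longrightarrow> s2 Y u j n \<omega> \<le> S_tot eps1 Y u n \<omega>"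
  unfolding S_tot_def by (rule member_le_sum) (auto intro: s2_nonneg)

lemma d2_nonneg: "0 \<le> d2 eps1 eps2 \<sigma> Y u j n \<omega>"
  by (induction eps1 eps2 \<sigma> Y u j n \<omega> rule: d2.induct)
    (auto simp: Let_def intro!: divide_nonneg_nonneg mult_nonneg_nonneg S_tot_nonneg s2_nonneg)

lemma d2_mult_s2_le_S_tot:
  assumes "0 < eps2"
  shows "d2 eps1 eps2 \<sigma> Y u j n \<omega> * s2 Y u j n \<omega> \<le> S_tot eps1 Y u n \<omega>"
proof -
  have S: "0 \<le> S_tot eps1 Y u n \<omega>" and s: "0 \<le> s2 Y u j n \<omega>"
    by (rule S_tot_nonneg s2_nonneg)+
  have min_le: "min a b * s \<le> S" if "0 \<le> s" "a * s \<le> S" for a b s S :: real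
    using that mult_right_mono[OF min.cobounded1 \<open>0 \<le> s\<close>, of a b] by linarith
  consider "j = 0" | "j = 1" | k where "j = Suc (Suc k)"
    by (metis One_nat_def not0_implies_Suc)
  then show ?thesis
  proof cases
    case 1
    then show ?thesis using S by simp
  next
    case 2
    then show ?thesis using S s by (auto intro!: min_le)
  next
    case 3
    have "real j powr (-(1 + eps2)) \<le> real j powr 0"
      using 3 assms by (intro powr_mono) auto
    then have "real j powr (-(1 + eps2)) \<le> 1"
      using 3 by simp
    then show ?thesis
      using 3 S s by (auto simp: Let_def intro!: min_le mult_left_le_one_le)
  qed
qed

text \<open>The recursion of d2 with the ratio S_n / s_{j,n}^2 replaced by its lower bound 1.\<close>
fun d2_lower :: "real \<Rightarrow> (nat \<Rightarrow> real) \<Rightarrow> nat \<Rightarrow> real" where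
  "d2_lower eps2 \<sigma> 0 = 0"
| "d2_lower eps2 \<sigma> (Suc 0) = min 1 (1 / (\<sigma> 1)\<^sup>2)"
| "d2_lower eps2 \<sigma> (Suc (Suc k)) = min (real (Suc (Suc k)) powr (-(1 + eps2)))
      ((\<sigma> (Suc k))\<^sup>2 * d2_lower eps2 \<sigma> (Suc k) / (\<sigma> (Suc (Suc k)))\<^sup>2)"

lemma d2_lower_pos:
  assumes "\<And>j. 1 \<le> j \<Longrightarrow> \<sigma> j > 0" and "1 \<le> j"
  shows "0 < d2_lower eps2 \<sigma> j"
  using assms(2)
proof (induction j)
  case (Suc k)
  show ?case
  proof (cases k)
    case 0
    then show ?thesis using assms(1)[of 1] by (simp; linarith)
  next
    case (Suc k')
    then show ?thesis using Suc.IH assms(1)[of "Suc k'"] assms(1)[of "Suc (Suc k')"] by simp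
  qed
qed simp

lemma d2_lower_le_d2:
  shows "j \<le> mdp_m eps1 n \<Longrightarrow> d2_lower eps2 \<sigma> j \<le> d2 eps1 eps2 \<sigma> Y u j n \<omega>"
proof (induction j)
  case 0
  then show ?case by simp
next
  case (Suc k)
  let ?S = "S_tot eps1 Y u n \<omega>" and ?s = "s2 Y u (Suc k) n \<omega>"
  have ratio: "1 \<le> ?S / ?s" if "?s \<noteq> 0"
    using s2_le_S_tot[of "Suc k" eps1 n Y u \<omega>] s2_nonneg[of Y u "Suc k" n \<omega>] Suc.prems that
    by simp
  show ?case
  proof (cases k)
    case 0
    then show ?thesis using ratio by auto
  next
    case (Suc k')
    let ?w = "real (Suc (Suc k')) powr (-(1 + eps2))"
    have "d2_lower eps2 \<sigma> (Suc k') \<le> d2 eps1 eps2 \<sigma> Y u (Suc k') n \<omega>"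
      using Suc.IH Suc.prems Suc by simp
    then have prev: "(\<sigma> (Suc k'))\<^sup>2 * d2_lower eps2 \<sigma> (Suc k') / (\<sigma> (Suc (Suc k')))\<^sup>2
       \<le> (\<sigma> (Suc k'))\<^sup>2 * d2 eps1 eps2 \<sigma> Y u (Suc k') n \<omega> / (\<sigma> (Suc (Suc k')))\<^sup>2"
      by (intro divide_right_mono mult_left_mono) auto
    have "?w \<le> ?w * ?S / ?s" if "?s \<noteq> 0"
      using mult_left_mono[OF ratio[OF that], of ?w] by simp
    then show ?thesis
      using prev Suc by (auto simp: Let_def min.coboundedI2 intro: min.mono)
  qed
qed

lemma dd_sq: "(dd eps1 eps2 \<sigma> Y u j n \<omega>)\<^sup>2 = d2 eps1 eps2 \<sigma> Y u j n \<omega>"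
  unfolding dd_def by (simp add: d2_nonneg)

lemma delta'_nonneg: "0 \<le> delta' eps1 eps2 \<sigma> Y u n \<omega>"
  unfolding delta'_def by (intro real_sqrt_ge_zero mult_nonneg_nonneg sum_nonneg) (auto simp: s2_nonneg)

lemma delta'_sq_le:
  assumes "0 < eps2"
  shows "(delta' eps1 eps2 \<sigma> Y u n \<omega>)\<^sup>2 \<le> real (mdp_m eps1 n) / real n * S_tot eps1 Y u n \<omega>"
proof -
  let ?m = "mdp_m eps1 n"
  let ?D = "(1 / real n) * (\<Sum>j=1..?m. (dd eps1 eps2 \<sigma> Y u j n \<omega>)\<^sup>2 * s2 Y u j n \<omega>)"
  have "(\<Sum>j=1..?m. (dd eps1 eps2 \<sigma> Y u j n \<omega>)\<^sup>2 * s2 Y u j n \<omega>) \<le> (\<Sum>j=1..?m. S_tot eps1 Y u n \<omega>)"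
    unfolding dd_sq by (intro sum_mono d2_mult_s2_le_S_tot assms)
  then have "?D \<le> (1 / real n) * (real ?m * S_tot eps1 Y u n \<omega>)"
    by (intro mult_left_mono) auto
  moreover have "0 \<le> ?D"
    by (intro mult_nonneg_nonneg sum_nonneg) (auto simp: s2_nonneg)
  ultimately show ?thesis unfolding delta'_def by simp
qed

lemma inner_Ybar_centered:
  "0 < n \<Longrightarrow> inner (Ybar Y n \<omega>) w = inner c w + (1 / real n) * (\<Sum>i<n. inner (Y i \<omega> - c) w)"
  unfolding Ybar_def by (simp add: inner_sum_left inner_diff_left sum_subtractf field_simps)

lemma sum_sq_centered_le:
  fixes a :: "nat \<Rightarrow> real"
  assumes "0 < n"
  shows "(\<Sum>i<n. (a i - (\<Sum>i<n. a i) / real n)\<^sup>2) \<le> (\<Sum>i<n. (a i)\<^sup>2)"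
proof -
  define b where "b = (\<Sum>i<n. a i) / real n"
  have "(\<Sum>i<n. (a i - b)\<^sup>2) = (\<Sum>i<n. (a i)\<^sup>2 - 2 * b * a i + b\<^sup>2)"
    by (intro sum.cong refl) (simp add: power2_diff algebra_simps)
  also have "\<dots> = (\<Sum>i<n. (a i)\<^sup>2) - 2 * b * (\<Sum>i<n. a i) + real n * b\<^sup>2"
    by (simp add: sum.distrib sum_subtractf sum_distrib_left)
  also have "\<dots> = (\<Sum>i<n. (a i)\<^sup>2) - real n * b\<^sup>2"
    using assms by (simp add: b_def power2_eq_square)
  finally show ?thesis unfolding b_def by simp
qed

lemma s2_le_sum_sq:
  assumes "2 \<le> n"
  shows "s2 Y u j n \<omega> \<le> (1 / (real n - 1)) * (\<Sum>i<n. (inner (Y i \<omega> - c) (u j))\<^sup>2)"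
proof -
  let ?a = "\<lambda>i. inner (Y i \<omega> - c) (u j)"
  have "inner (Y i \<omega> - Ybar Y n \<omega>) (u j) = ?a i - (\<Sum>i<n. ?a i) / real n" for i
    using inner_Ybar_centered[of n Y \<omega> "u j" c] assms by (simp add: inner_diff_left)
  then have "(\<Sum>i<n. (inner (Y i \<omega> - Ybar Y n \<omega>) (u j))\<^sup>2) \<le> (\<Sum>i<n. (?a i)\<^sup>2)"
    using sum_sq_centered_le[of n ?a] assms by simp
  then show ?thesis unfolding s2_def using assms by (intro mult_left_mono) auto
qed

lemma le_k_stop_iff:
  "k \<le> k_stop eps1 eps2 \<sigma> Y u n \<omega> \<longleftrightarrow>
   (\<forall>k'<k. \<not> (k' \<le> mdp_m eps1 n \<and>
        sqrt (\<Sum>j=k'+1..mdp_m eps1 n. (dd eps1 eps2 \<sigma> Y u j n \<omega>)\<^sup>2 * (inner (Ybar Y n \<omega>) (u j))\<^sup>2)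
          \<le> delta' eps1 eps2 \<sigma> Y u n \<omega>))"
  (is "_ \<longleftrightarrow> (\<forall>k'<k. \<not> ?stop k')")
proof -
  have "?stop (mdp_m eps1 n)" using delta'_nonneg by simp
  then have "?stop (k_stop eps1 eps2 \<sigma> Y u n \<omega>)"
    unfolding k_stop_def by (rule LeastI)
  moreover have "k_stop eps1 eps2 \<sigma> Y u n \<omega> \<le> k'" if "?stop k'" for k'
    unfolding k_stop_def using that by (rule Least_le)
  ultimately show ?thesis
    using not_le order.strict_trans2 by blast
qed

lemma le_k_stop_if_residual_gt:
  assumes "k \<le> j" "j \<le> mdp_m eps1 n"
    and "(delta' eps1 eps2 \<sigma> Y u n \<omega>)\<^sup>2 < d2 eps1 eps2 \<sigma> Y u j n \<omega> * (inner (Ybar Y n \<omega>) (u j))\<^sup>2"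
  shows "k \<le> k_stop eps1 eps2 \<sigma> Y u n \<omega>"
  unfolding le_k_stop_iff
proof (intro allI impI notI)
  fix k'
  let ?R = "\<Sum>j=k'+1..mdp_m eps1 n. (dd eps1 eps2 \<sigma> Y u j n \<omega>)\<^sup>2 * (inner (Ybar Y n \<omega>) (u j))\<^sup>2"
  assume "k' < k" and stop: "k' \<le> mdp_m eps1 n \<and> sqrt ?R \<le> delta' eps1 eps2 \<sigma> Y u n \<omega>"
  then have "j \<in> {k'+1..mdp_m eps1 n}" using assms by auto
  then have "d2 eps1 eps2 \<sigma> Y u j n \<omega> * (inner (Ybar Y n \<omega>) (u j))\<^sup>2 \<le> ?R"
    unfolding dd_sq by (rule member_le_sum) (auto simp: d2_nonneg)
  then have "sqrt ((delta' eps1 eps2 \<sigma> Y u n \<omega>)\<^sup>2) < sqrt ?R"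
    using assms(3) by (intro real_sqrt_less_mono) linarith
  then show False using stop delta'_nonneg[of eps1 eps2 \<sigma> Y u n \<omega>] by simp
qed

lemma le_k_stop_if_coord_close:
  assumes "k \<le> j" "j \<le> mdp_m eps1 n"
    and close: "\<bar>inner (Ybar Y n \<omega>) (u j) - a\<bar> < \<bar>a\<bar> / 2"
    and small: "(delta' eps1 eps2 \<sigma> Y u n \<omega>)\<^sup>2 < d2_lower eps2 \<sigma> j * a\<^sup>2 / 4"
  shows "k \<le> k_stop eps1 eps2 \<sigma> Y u n \<omega>"
proof -
  define x where "x = inner (Ybar Y n \<omega>) (u j)"
  have "\<bar>a\<bar> / 2 < \<bar>x\<bar>"
    using close unfolding x_def by linarith
  then have "(\<bar>a\<bar> / 2)\<^sup>2 < \<bar>x\<bar>\<^sup>2"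
    by (rule power_strict_mono) auto
  then have "a\<^sup>2 / 4 \<le> x\<^sup>2"
    by (simp add: power_divide)
  then have "d2_lower eps2 \<sigma> j * (a\<^sup>2 / 4) \<le> d2 eps1 eps2 \<sigma> Y u j n \<omega> * x\<^sup>2"
    using d2_lower_le_d2[of j eps1 n eps2 \<sigma> Y u \<omega>] assms(2)
    by (intro mult_mono) (auto simp: d2_nonneg)
  then show ?thesis
    using small assms(1,2) unfolding x_def by (intro le_k_stop_if_residual_gt[of k j]) auto
qed

lemma eventually_le_mdp_m:
  assumes "eps1 < 1"
  shows "eventually (\<lambda>n. j \<le> mdp_m eps1 n) sequentially"
proof -
  have "filterlim (\<lambda>n. real n powr (1 - eps1)) at_top sequentially"
    using assms by (intro filterlim_compose[OF real_powr_at_top filterlim_real_sequentially]) simp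
  then have "eventually (\<lambda>n. real j + 1 \<le> real n powr (1 - eps1)) sequentially"
    unfolding filterlim_at_top by blast
  then show ?thesis
    by eventually_elim (auto simp: mdp_m_def le_nat_floor)
qed

lemma mdp_m_over_n_tendsto_0:
  assumes "0 < eps1"
  shows "(\<lambda>n. real (mdp_m eps1 n) / real n) \<longlonglongrightarrow> 0"
proof (rule tendsto_sandwich[of "\<lambda>_. 0" _ _ "\<lambda>n. real n powr (-eps1)"])
  show "eventually (\<lambda>n. real (mdp_m eps1 n) / real n \<le> real n powr (-eps1)) sequentially"
    using eventually_gt_at_top[of 0]
  proof eventually_elim
    case (elim n)
    have "real (mdp_m eps1 n) \<le> real n powr (1 - eps1)"
      unfolding mdp_m_def by simp
    also have "\<dots> = real n * real n powr (-eps1)"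
      using elim by (simp add: powr_diff powr_minus field_simps)
    finally show ?case using elim by (simp add: field_simps)
  qed
  show "(\<lambda>n. real n powr (-eps1)) \<longlonglongrightarrow> 0"
    using assms by (intro tendsto_neg_powr filterlim_real_sequentially) simp
qed auto

lemma tendsto_diagonal_seq:
  fixes g :: "nat \<Rightarrow> nat \<Rightarrow> 'a::metric_space"
  assumes "\<And>k. (\<lambda>n. g k n) \<longlonglongrightarrow> L"
  shows "\<exists>q::nat \<Rightarrow> nat. filterlim q at_top sequentially \<and> (\<lambda>n. g (q n) n) \<longlonglongrightarrow> L"
proof -
  have "\<exists>N. \<forall>n\<ge>N. dist (g k n) L < 1 / real (Suc k)" for k
    using tendstoD[OF assms[of k], of "1 / real (Suc k)"] by (simp add: eventually_sequentially)
  then obtain N where N: "\<And>k n. N k \<le> n \<Longrightarrow> dist (g k n) L < 1 / real (Suc k)"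
    by metis
  (* q n is the largest k \<le> n such that the accuracies 1/(i+1), i \<le> k, are all reached by time n *)
  define Q where "Q n = {k. k \<le> n \<and> (\<forall>i\<le>k. N i \<le> n)}" for n
  define q where "q n = Max (insert 0 (Q n))" for n
  have finite_Q: "finite (Q n)" for n
    unfolding Q_def by auto
  have q_lim: "filterlim q at_top sequentially"
    unfolding filterlim_at_top eventually_sequentially
  proof (intro allI exI allI impI)
    fix K n
    assume "max K (Max (N ` {..K})) \<le> n"
    then have "K \<in> Q n"
      unfolding Q_def by (auto intro: order_trans[OF Max_ge])
    then show "K \<le> q n"
      unfolding q_def using finite_Q by (intro Max_ge) auto
  qed
  have "eventually (\<lambda>n. dist (g (q n) n) L \<le> 1 / real (Suc (q n))) sequentially"
    unfolding eventually_sequentially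
  proof (intro exI allI impI)
    fix n
    assume "N 0 \<le> n"
    then have "q n \<in> Q n"
      unfolding q_def using finite_Q Max_in[of "insert 0 (Q n)"] by (auto simp: Q_def)
    then have "N (q n) \<le> n"
      unfolding Q_def by auto
    then show "dist (g (q n) n) L \<le> 1 / real (Suc (q n))"
      using N less_imp_le by blast
  qed
  moreover have "(\<lambda>n. 1 / real (Suc (q n))) \<longlonglongrightarrow> 0"
    using filterlim_compose[OF filterlim_real_sequentially filterlim_compose[OF filterlim_Suc q_lim]]
    by (intro tendsto_divide_0[OF tendsto_const] filterlim_at_top_imp_at_infinity) (simp add: o_def)
  ultimately have "(\<lambda>n. dist (g (q n) n) L) \<longlonglongrightarrow> 0"
    using tendsto_sandwich[of "\<lambda>_. 0" _ sequentially "\<lambda>n. 1 / real (Suc (q n))" 0] by auto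
  then show ?thesis
    using q_lim tendsto_dist_iff by blast
qed

lemma
  fixes Y :: "nat \<Rightarrow> 'm \<Rightarrow> 'y::{real_inner,polish_space}"
  assumes [measurable]: "\<And>i. Y i \<in> borel_measurable M"
  shows Ybar_measurable[measurable]: "(\<lambda>\<omega>. Ybar Y n \<omega>) \<in> borel_measurable M"
    and s2_measurable[measurable]: "(\<lambda>\<omega>. s2 Y u j n \<omega>) \<in> borel_measurable M"
    and S_tot_measurable[measurable]: "(\<lambda>\<omega>. S_tot eps1 Y u n \<omega>) \<in> borel_measurable M"
  unfolding Ybar_def s2_def S_tot_def by measurable

lemma d2_measurable[measurable]:
  fixes Y :: "nat \<Rightarrow> 'm \<Rightarrow> 'y::{real_inner,polish_space}"
  assumes [measurable]: "\<And>i. Y i \<in> borel_measurable M"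
  shows "(\<lambda>\<omega>. d2 eps1 eps2 \<sigma> Y u j n \<omega>) \<in> borel_measurable M"
proof (induction j)
  case (Suc k)
  then show ?case
    by (cases k) (simp_all add: Let_def; measurable)+
qed simp

lemma
  fixes Y :: "nat \<Rightarrow> 'm \<Rightarrow> 'y::{real_inner,polish_space}"
  assumes [measurable]: "\<And>i. Y i \<in> borel_measurable M"
  shows delta'_measurable[measurable]: "(\<lambda>\<omega>. delta' eps1 eps2 \<sigma> Y u n \<omega>) \<in> borel_measurable M"
    and le_k_stop_sets[measurable]: "{\<omega> \<in> space M. k \<le> k_stop eps1 eps2 \<sigma> Y u n \<omega>} \<in> sets M"
  unfolding delta'_def le_k_stop_iff dd_def by measurable

lemma integral_eq_if_distr_eq:
  fixes g :: "'b::topological_space \<Rightarrow> 'c::{banach,second_countable_topology}"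
  assumes "X \<in> borel_measurable M" "X' \<in> borel_measurable M" "distr M borel X = distr M borel X'"
    and "g \<in> borel_measurable borel"
  shows "integral\<^sup>L M (\<lambda>\<omega>. g (X \<omega>)) = integral\<^sup>L M (\<lambda>\<omega>. g (X' \<omega>))"
  using integral_distr[of X M borel g] integral_distr[of X' M borel g] assms by simp

lemma integrable_iff_if_distr_eq:
  fixes g :: "'b::topological_space \<Rightarrow> 'c::{banach,second_countable_topology}"
  assumes "X \<in> borel_measurable M" "X' \<in> borel_measurable M" "distr M borel X = distr M borel X'"
    and "g \<in> borel_measurable borel"
  shows "integrable M (\<lambda>\<omega>. g (X \<omega>)) \<longleftrightarrow> integrable M (\<lambda>\<omega>. g (X' \<omega>))"
  using integrable_distr_eq[of X M borel g] integrable_distr_eq[of X' M borel g] assms by simp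

lemma bounded_partial_sums_if_powr_bound:
  fixes f :: "nat \<Rightarrow> real"
  assumes "1 < p" and f: "\<And>j. 1 \<le> j \<Longrightarrow> 0 \<le> f j \<and> f j \<le> C * real j powr (-p)"
  shows "\<exists>V. \<forall>m. (\<Sum>j=1..m. f j) \<le> V"
proof (intro exI allI)
  fix m
  have "0 \<le> C"
    using f[of 1] by simp
  have "(\<Sum>j=1..m. f j) \<le> (\<Sum>j=1..m. C * real j powr (-p))"
    using f by (intro sum_mono) auto
  also have "\<dots> \<le> C * (\<Sum>j. real j powr (-p))"
    unfolding sum_distrib_left[symmetric] using summable_real_powr_iff[of "-p"] assms(1)
    by (intro mult_left_mono \<open>0 \<le> C\<close> sum_le_suminf) auto
  finally show "(\<Sum>j=1..m. f j) \<le> C * (\<Sum>j. real j powr (-p))" .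
qed

context prob_space
begin

lemma indep_sum_square_integral:
  fixes Z :: "nat \<Rightarrow> 'a \<Rightarrow> real"
  assumes indep: "indep_vars (\<lambda>_. borel) Z UNIV"
    and meas: "\<And>i. Z i \<in> borel_measurable M"
    and sq: "\<And>i. integrable M (\<lambda>\<omega>. (Z i \<omega>)\<^sup>2)"
    and mean: "\<And>i. expectation (Z i) = 0"
    and var: "\<And>i. expectation (\<lambda>\<omega>. (Z i \<omega>)\<^sup>2) = V"
  shows "integrable M (\<lambda>\<omega>. (\<Sum>i<n. Z i \<omega>)\<^sup>2) \<and> expectation (\<lambda>\<omega>. (\<Sum>i<n. Z i \<omega>)\<^sup>2) = real n * V"
proof (induction n)
  case 0
  show ?case by simp
next
  case (Suc n)
  let ?S = "\<lambda>\<omega>. \<Sum>i<n. Z i \<omega>"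
  have int_Z: "integrable M (Z i)" for i
    using square_integrable_imp_integrable[OF meas sq] .
  have int_S: "integrable M ?S"
    using int_Z by auto
  have "indep_var borel (Z n) borel ?S"
    by (rule indep_vars_sum) (auto intro: indep_vars_subset[OF indep])
  note cross = indep_var_integrable[OF this int_Z int_S] indep_var_lebesgue_integral[OF this int_Z int_S]
  have square: "(\<Sum>i<Suc n. Z i \<omega>)\<^sup>2 = (?S \<omega>)\<^sup>2 + 2 * (Z n \<omega> * ?S \<omega>) + (Z n \<omega>)\<^sup>2" for \<omega>
    by (simp add: power2_sum algebra_simps)
  show ?case
    unfolding square using Suc.IH cross sq[of n] mean[of n] var[of n]
    by (simp add: Bochner_Integration.integral_add algebra_simps)
qed

lemma prob_abs_sum_ge_le:
  fixes Z :: "nat \<Rightarrow> 'a \<Rightarrow> real"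
  assumes indep: "indep_vars (\<lambda>_. borel) Z UNIV"
    and meas: "\<And>i. Z i \<in> borel_measurable M"
    and sq: "\<And>i. integrable M (\<lambda>\<omega>. (Z i \<omega>)\<^sup>2)"
    and mean: "\<And>i. expectation (Z i) = 0"
    and var: "\<And>i. expectation (\<lambda>\<omega>. (Z i \<omega>)\<^sup>2) = V"
    and "0 < n" "0 < t"
  shows "measure M {\<omega>\<in>space M. real n * t \<le> \<bar>\<Sum>i<n. Z i \<omega>\<bar>} \<le> V / (real n * t\<^sup>2)"
proof -
  note sum_sq = indep_sum_square_integral[OF assms(1-5), of n]
  have "measure M {\<omega>\<in>space M. real n * t \<le> \<bar>\<Sum>i<n. Z i \<omega>\<bar>}
      \<le> expectation (\<lambda>\<omega>. (\<Sum>i<n. Z i \<omega>)^2) / (real n * t)\<^sup>2"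
    using sum_sq assms(6,7) meas by (intro second_moment_method) auto
  also have "\<dots> = V / (real n * t\<^sup>2)"
    using sum_sq assms(6) by (simp add: power2_eq_square)
  finally show ?thesis .
qed

end

locale iid_samples = prob_space M
  for M :: "'m measure" +
  fixes Y :: "nat \<Rightarrow> 'm \<Rightarrow> 'y::{real_inner,polish_space}" and yhat :: 'y and u :: "nat \<Rightarrow> 'y"
  assumes Y_measurable[measurable]: "\<And>i. Y i \<in> borel_measurable M"
    and Y_indep: "indep_vars (\<lambda>_. borel) Y UNIV"
    and Y_ident: "\<And>i. distr M borel (Y i) = distr M borel (Y 0)"
    and Y_integrable: "integrable M (Y 0)"
    and Y_mean: "expectation (Y 0) = yhat"
    and coord_sq_integrable: "\<And>j. 1 \<le> j \<Longrightarrow> integrable M (\<lambda>\<omega>. (inner (Y 0 \<omega> - yhat) (u j))\<^sup>2)"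
begin

definition coord_var :: "nat \<Rightarrow> real" where
  "coord_var j = expectation (\<lambda>\<omega>. (inner (Y 0 \<omega> - yhat) (u j))\<^sup>2)"

lemma coord_var_nonneg: "0 \<le> coord_var j"
  unfolding coord_var_def by simp

lemma integrable_coord_sq: "1 \<le> j \<Longrightarrow> integrable M (\<lambda>\<omega>. (inner (Y i \<omega> - yhat) (u j))\<^sup>2)"
  using integrable_iff_if_distr_eq[OF Y_measurable Y_measurable Y_ident, of "\<lambda>y. (inner (y - yhat) (u j))\<^sup>2" i]
    coord_sq_integrable by simp

lemma expectation_coord_sq: "expectation (\<lambda>\<omega>. (inner (Y i \<omega> - yhat) (u j))\<^sup>2) = coord_var j"
  unfolding coord_var_def
  by (rule integral_eq_if_distr_eq[OF Y_measurable Y_measurable Y_ident]) simp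

lemma expectation_coord: "expectation (\<lambda>\<omega>. inner (Y i \<omega> - yhat) (u j)) = 0"
proof -
  have "expectation (\<lambda>\<omega>. inner (Y i \<omega> - yhat) (u j)) = expectation (\<lambda>\<omega>. inner (Y 0 \<omega> - yhat) (u j))"
    by (rule integral_eq_if_distr_eq[OF Y_measurable Y_measurable Y_ident]) simp
  also have "\<dots> = expectation (\<lambda>\<omega>. inner (Y 0 \<omega>) (u j)) - inner yhat (u j)"
    using Y_integrable by (simp add: inner_diff_left prob_space)
  also have "\<dots> = 0"
    using Y_integrable Y_mean by simp
  finally show ?thesis .
qed

lemma prob_Ybar_coord_dev_ge:
  assumes "0 < n" "0 < t" "1 \<le> j"
  shows "measure M {\<omega>\<in>space M. t \<le> \<bar>inner (Ybar Y n \<omega>) (u j) - inner yhat (u j)\<bar>}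
    \<le> coord_var j / (real n * t\<^sup>2)"
proof -
  define Z where "Z i \<omega> = inner (Y i \<omega> - yhat) (u j)" for i \<omega>
  have Z_indep: "indep_vars (\<lambda>_. borel) Z UNIV"
    unfolding Z_def by (rule indep_vars_compose2[OF Y_indep, of "\<lambda>_ y. inner (y - yhat) (u j)"]) simp
  have dev: "inner (Ybar Y n \<omega>) (u j) - inner yhat (u j) = (\<Sum>i<n. Z i \<omega>) / real n" for \<omega>
    unfolding Z_def using inner_Ybar_centered[of n Y \<omega> "u j" yhat] assms(1) by simp
  have "t \<le> \<bar>S / real n\<bar> \<longleftrightarrow> real n * t \<le> \<bar>S\<bar>" for S
    using assms(1) by (simp add: pos_le_divide_eq mult.commute)
  then have "{\<omega>\<in>space M. t \<le> \<bar>inner (Ybar Y n \<omega>) (u j) - inner yhat (u j)\<bar>}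
      = {\<omega>\<in>space M. real n * t \<le> \<bar>\<Sum>i<n. Z i \<omega>\<bar>}"
    by (simp add: dev)
  also have "measure M \<dots> \<le> coord_var j / (real n * t\<^sup>2)"
    using assms Z_indep unfolding Z_def
    by (intro prob_abs_sum_ge_le) (auto simp: integrable_coord_sq expectation_coord expectation_coord_sq)
  finally show ?thesis .
qed

text \<open>delta_n'^2 is dominated by m_n/n times the non-centred version T of S_n, whose
  expectation is at most twice the sum of the variances (Markov).\<close>
lemma prob_delta'_sq_ge:
  assumes "2 \<le> n" "0 < c" "0 < eps2"
    and V: "(\<Sum>j=1..mdp_m eps1 n. coord_var j) \<le> V"
  shows "measure M {\<omega>\<in>space M. c \<le> (delta' eps1 eps2 \<sigma> Y u n \<omega>)\<^sup>2}
    \<le> real (mdp_m eps1 n) / real n * (2 * V / c)"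
proof -
  let ?m = "mdp_m eps1 n"
  define T where "T \<omega> = (\<Sum>j=1..?m. (1 / (real n - 1)) * (\<Sum>i<n. (inner (Y i \<omega> - yhat) (u j))\<^sup>2))" for \<omega>
  have [measurable]: "T \<in> borel_measurable M"
    unfolding T_def by measurable
  have T_nonneg: "0 \<le> T \<omega>" for \<omega>
    unfolding T_def using assms(1) by (intro sum_nonneg mult_nonneg_nonneg) auto
  have T_int: "integrable M T"
    unfolding T_def by (auto simp: integrable_coord_sq)
  have "expectation T = (\<Sum>j=1..?m. (1 / (real n - 1)) * (\<Sum>i<n. coord_var j))"
    unfolding T_def using integrable_coord_sq expectation_coord_sq
    by (subst Bochner_Integration.integral_sum) (auto simp: Bochner_Integration.integral_sum)
  also have "\<dots> = real n / (real n - 1) * (\<Sum>j=1..?m. coord_var j)"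
    by (simp add: sum_distrib_left)
  also have "\<dots> \<le> 2 * (\<Sum>j=1..?m. coord_var j)"
    using assms(1) by (intro mult_right_mono sum_nonneg coord_var_nonneg) (simp add: field_simps)
  also have "\<dots> \<le> 2 * V"
    using V by simp
  finally have ET: "expectation T \<le> 2 * V" .
  have "{\<omega>\<in>space M. c \<le> (delta' eps1 eps2 \<sigma> Y u n \<omega>)\<^sup>2} \<subseteq> {\<omega>\<in>space M. c \<le> real ?m / real n * T \<omega>}"
  proof safe
    fix \<omega>
    assume "c \<le> (delta' eps1 eps2 \<sigma> Y u n \<omega>)\<^sup>2"
    also have "\<dots> \<le> real ?m / real n * S_tot eps1 Y u n \<omega>"
      using assms(3) by (rule delta'_sq_le)
    also have "\<dots> \<le> real ?m / real n * T \<omega>"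
      unfolding S_tot_def T_def using assms(1) by (intro mult_left_mono sum_mono s2_le_sum_sq) auto
    finally show "c \<le> real ?m / real n * T \<omega>" .
  qed
  then have "measure M {\<omega>\<in>space M. c \<le> (delta' eps1 eps2 \<sigma> Y u n \<omega>)\<^sup>2}
      \<le> measure M {\<omega>\<in>space M. c \<le> real ?m / real n * T \<omega>}"
    by (intro finite_measure_mono) measurable
  also have "\<dots> \<le> expectation (\<lambda>\<omega>. real ?m / real n * T \<omega>) / c"
    using T_int T_nonneg assms(2) by (intro integral_Markov_inequality_measure[where A="space M"]) auto
  also have "\<dots> \<le> real ?m / real n * (2 * V / c)"
    using ET assms(2) by (simp add: divide_right_mono mult_left_mono)
  finally show ?thesis .
qed

lemma prob_le_k_stop_ge:
  fixes j0 :: nat and eps2 :: real and \<sigma> :: "nat \<Rightarrow> real"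
  defines "a \<equiv> inner yhat (u j0)"
    and "c \<equiv> d2_lower eps2 \<sigma> j0 * (inner yhat (u j0))\<^sup>2 / 4"
  assumes "2 \<le> n" "k \<le> j0" "1 \<le> j0" "j0 \<le> mdp_m eps1 n" "0 < eps2" "0 < c"
    and V: "(\<Sum>j=1..mdp_m eps1 n. coord_var j) \<le> V"
  shows "1 - coord_var j0 / (real n * (\<bar>a\<bar> / 2)\<^sup>2) - real (mdp_m eps1 n) / real n * (2 * V / c)
    \<le> measure M {\<omega> \<in> space M. k \<le> k_stop eps1 eps2 \<sigma> Y u n \<omega>}"
proof -
  define coord_far where "coord_far = {\<omega>\<in>space M. \<bar>a\<bar> / 2 \<le> \<bar>inner (Ybar Y n \<omega>) (u j0) - a\<bar>}"
  define delta'_large where "delta'_large = {\<omega>\<in>space M. c \<le> (delta' eps1 eps2 \<sigma> Y u n \<omega>)\<^sup>2}"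
  define stops_late where "stops_late = {\<omega> \<in> space M. k \<le> k_stop eps1 eps2 \<sigma> Y u n \<omega>}"
  have [measurable]: "coord_far \<in> sets M" "delta'_large \<in> sets M" "stops_late \<in> sets M"
    unfolding coord_far_def delta'_large_def stops_late_def by measurable
  have late: "space M - (coord_far \<union> delta'_large) \<subseteq> stops_late"
  proof
    fix \<omega>
    assume \<omega>: "\<omega> \<in> space M - (coord_far \<union> delta'_large)"
    then have "k \<le> k_stop eps1 eps2 \<sigma> Y u n \<omega>"
      using assms(4,6)
      by (intro le_k_stop_if_coord_close[where a=a and j=j0]) (auto simp: coord_far_def delta'_large_def a_def c_def)
    with \<omega> show "\<omega> \<in> stops_late"
      by (simp add: stops_late_def)
  qed
  have "1 - measure M (coord_far \<union> delta'_large) \<le> measure M stops_late"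
    using finite_measure_mono[OF late] prob_compl[of "coord_far \<union> delta'_large"] by simp
  moreover have "a \<noteq> 0"
    using \<open>0 < c\<close> unfolding a_def c_def by auto
  then have "measure M coord_far \<le> coord_var j0 / (real n * (\<bar>a\<bar> / 2)\<^sup>2)"
    unfolding coord_far_def a_def using assms(3,5) by (intro prob_Ybar_coord_dev_ge) auto
  moreover have "measure M delta'_large \<le> real (mdp_m eps1 n) / real n * (2 * V / c)"
    unfolding delta'_large_def using assms(3,7,8) V by (intro prob_delta'_sq_ge) auto
  ultimately show ?thesis
    unfolding stops_late_def using measure_Un_le[of coord_far M delta'_large] by simp
qed

lemma prob_le_k_stop_tendsto_1:
  assumes \<sigma>_pos: "\<And>j. 1 \<le> j \<Longrightarrow> \<sigma> j > 0"
    and eps1: "0 < eps1" "eps1 < 1" and eps2: "0 < eps2"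
    and V: "\<And>m. (\<Sum>j=1..m. coord_var j) \<le> V"
    and j0: "k \<le> j0" "1 \<le> j0" "inner yhat (u j0) \<noteq> 0"
  shows "(\<lambda>n. measure M {\<omega> \<in> space M. k \<le> k_stop eps1 eps2 \<sigma> Y u n \<omega>}) \<longlonglongrightarrow> 1"
proof -
  define a where "a = inner yhat (u j0)"
  define c where "c = d2_lower eps2 \<sigma> j0 * a\<^sup>2 / 4"
  have "0 < d2_lower eps2 \<sigma> j0"
    using d2_lower_pos \<sigma>_pos j0(2) by blast
  then have c_pos: "0 < c"
    unfolding c_def a_def using j0 by simp
  define lower where
    "lower n = 1 - coord_var j0 / (real n * (\<bar>a\<bar> / 2)\<^sup>2) - real (mdp_m eps1 n) / real n * (2 * V / c)" for n
  have "eventually (\<lambda>n. lower n \<le> measure M {\<omega> \<in> space M. k \<le> k_stop eps1 eps2 \<sigma> Y u n \<omega>}) sequentially"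
    using eventually_ge_at_top[of 2] eventually_le_mdp_m[OF eps1(2), of j0]
  proof eventually_elim
    case (elim n)
    then show ?case
      unfolding lower_def a_def using prob_le_k_stop_ge[of n k j0] j0 eps2 c_pos V
      by (simp add: c_def a_def)
  qed
  moreover have "(\<lambda>n. coord_var j0 / (\<bar>a\<bar> / 2)\<^sup>2 / real n) \<longlonglongrightarrow> 0"
    by (rule lim_const_over_n)
  then have "lower \<longlonglongrightarrow> 1 - 0 - 0 * (2 * V / c)"
    unfolding lower_def
    by (intro tendsto_diff tendsto_mult tendsto_const mdp_m_over_n_tendsto_0 eps1) (simp add: mult.commute)
  ultimately show ?thesis
    using tendsto_sandwich[of lower _ sequentially "\<lambda>_. 1" 1] by (simp add: prob_le_1)
qed

end

theorem mainTheorem7: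
  fixes K :: "'x::{real_inner, polish_space} \<Rightarrow> 'y::{real_inner, polish_space}"
    and \<sigma> :: "nat \<Rightarrow> real" and u :: "nat \<Rightarrow> 'y" and v :: "nat \<Rightarrow> 'x"
    and M :: "'m measure" and Y :: "nat \<Rightarrow> 'm \<Rightarrow> 'y"
    and xhat :: 'x and yhat :: 'y
    and p q C_p C eps1 eps2 \<nu> \<rho> :: real
  assumes K_lin: "bounded_linear K"
    and K_compact: "compact (closure (K ` cball 0 1))"
    and K_dense: "closure (range K) = UNIV"
    and u_on: "\<And>i j. 1 \<le> i \<Longrightarrow> 1 \<le> j \<Longrightarrow> inner (u i) (u j) = (if i = j then 1 else 0)"
    and v_on: "\<And>i j. 1 \<le> i \<Longrightarrow> 1 \<le> j \<Longrightarrow> inner (v i) (v j) = (if i = j then 1 else 0)"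
    and sigma_pos: "\<And>j. 1 \<le> j \<Longrightarrow> \<sigma> j > 0"
    and sigma_mono: "\<And>j. 1 \<le> j \<Longrightarrow> \<sigma> (Suc j) \<le> \<sigma> j"
    and sigma_lim: "\<sigma> \<longlonglongrightarrow> 0"
    and Kv: "\<And>j. 1 \<le> j \<Longrightarrow> K (v j) = \<sigma> j *\<^sub>R u j"
    and svd: "\<And>x. ((\<lambda>j. (\<sigma> j * inner x (v j)) *\<^sub>R u j) has_sum K x) {1..}"
    and P: "prob_space M"
    and Y_meas: "\<And>i. Y i \<in> borel_measurable M"
    and Y_indep: "prob_space.indep_vars M (\<lambda>_. borel) Y UNIV"
    and Y_ident: "\<And>i. distr M borel (Y i) = distr M borel (Y 0)"
    and Y_int: "integrable M (Y 0)"
    and Y_mean: "prob_space.expectation M (Y 0) = yhat"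
    and yhat_def: "yhat = K xhat"
    and pq: "q > p - 1" "p - 1 > 0"
    and sigma_rate: "\<exists>c1 c2. c1 > 0 \<and> c2 > 0 \<and> (\<forall>j\<ge>1. c1 * real j powr (-q) \<le> (\<sigma> j)\<^sup>2
                       \<and> (\<sigma> j)\<^sup>2 \<le> c2 * real j powr (-q))"
    and mom4_int: "\<And>j. 1 \<le> j \<Longrightarrow> integrable M (\<lambda>\<omega>. (inner (Y 0 \<omega> - yhat) (u j)) ^ 4)"
    and var_pos: "\<And>j. 1 \<le> j \<Longrightarrow> 0 < prob_space.expectation M (\<lambda>\<omega>. (inner (Y 0 \<omega> - yhat) (u j))\<^sup>2)"
    and var_bound: "\<And>j. 1 \<le> j \<Longrightarrow>
          prob_space.expectation M (\<lambda>\<omega>. (inner (Y 0 \<omega> - yhat) (u j))\<^sup>2) \<le> C_p * real j powr (-p)"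
    and mom4: "\<And>j. 1 \<le> j \<Longrightarrow>
          prob_space.expectation M (\<lambda>\<omega>. (inner (Y 0 \<omega> - yhat) (u j)) ^ 4)
            \<le> C * (prob_space.expectation M (\<lambda>\<omega>. (inner (Y 0 \<omega> - yhat) (u j))\<^sup>2))\<^sup>2"
    and eps1: "0 < eps1" "eps1 < 1"
    and eps2: "0 < eps2" "eps2 < min 1 (p - 1)"
    and nu_rho: "\<nu> > 0" "\<rho> > 0"
    and source: "\<exists>\<xi>. norm \<xi> \<le> \<rho> \<and>
          ((\<lambda>j. (\<sigma> j powr \<nu> * inner \<xi> (v j)) *\<^sub>R v j) has_sum xhat) {1..}"
    and nonvanish: "\<And>k. \<exists>j\<ge>k. inner yhat (u j) \<noteq> 0"
  shows "(\<forall>k. (\<lambda>n. measure M {\<omega> \<in> space M. k \<le> k_stop eps1 eps2 \<sigma> Y u n \<omega>}) \<longlonglongrightarrow> 1)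
       \<and> (\<exists>qn :: nat \<Rightarrow> nat. filterlim qn at_top sequentially \<and>
           (\<lambda>n. measure M {\<omega> \<in> space M. qn n \<le> k_stop eps1 eps2 \<sigma> Y u n \<omega>}) \<longlonglongrightarrow> 1)"
proof -
  (* non-integrable functions have integral 0, so var_pos already forces integrability *)
  have "integrable M (\<lambda>\<omega>. (inner (Y 0 \<omega> - yhat) (u j))\<^sup>2)" if "1 \<le> j" for j
    using var_pos[OF that] not_integrable_integral_eq by force
  then interpret iid_samples M Y yhat u
    using P Y_meas Y_indep Y_ident Y_int Y_mean by (simp add: iid_samples_def iid_samples_axioms_def)
  obtain V where V: "\<And>m. (\<Sum>j=1..m. coord_var j) \<le> V"
    using bounded_partial_sums_if_powr_bound[of p coord_var C_p] pq var_pos var_bound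
    unfolding coord_var_def by fastforce
  have late: "(\<lambda>n. measure M {\<omega> \<in> space M. k \<le> k_stop eps1 eps2 \<sigma> Y u n \<omega>}) \<longlonglongrightarrow> 1" for k
  proof -
    obtain j0 where "max k 1 \<le> j0" "inner yhat (u j0) \<noteq> 0"
      using nonvanish by blast
    then show ?thesis
      using sigma_pos eps1 eps2 V by (intro prob_le_k_stop_tendsto_1[of \<sigma> eps1 eps2 V k j0]) auto
  qed
  then show ?thesis
    using tendsto_diagonal_seq[of "\<lambda>k n. measure M {\<omega> \<in> space M. k \<le> k_stop eps1 eps2 \<sigma> Y u n \<omega>}" 1]
    by blast
qed

end
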